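(* Let $S^1=[0,1)$ with addition mod 1 and $T(x)=2x\pmod 1$. Let $\mu$ be the Gibbs probability for $\log J$, where $J:S^1\to\mathbb{R}$ is positive, Hölder continuous, with $\sum_{x:\,T(x)=y}J(x)=1$ for all $y$. For $n\in\mathbb{N}$ let $\nu_n=\mu*\mu*\cdots*\mu$ ($n$ factors). Then $\nu_n$ converges weakly, as $n\to\infty$, to the Lebesgue probability on $S^1$.
   Context: The Gibbs probability for $\log J$ is the probability $\mu$ with $\mathcal{L}_{\log J}^*\mu=\mu$, where $\mathcal{L}_{\log J}(\varphi)(y)=\sum_{x:\,T(x)=y}J(x)\varphi(x)$. Convolution: $\int\phi\,d(\eta*\mu)=\int\!\!\int\phi(x+y)\,d\mu(y)\,d\eta(x)$ (sums mod 1). *)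

theory Defs
  imports "HOL-Probability.Probability"
begin

definition S1 :: "real set" where "S1 = {0..<1}"

definition doubling :: "real \<Rightarrow> real" where "doubling x = frac (2 * x)"

definition circ_dist :: "real \<Rightarrow> real \<Rightarrow> real" where
  "circ_dist x y = min \<bar>x - y\<bar> (1 - \<bar>x - y\<bar>)"

definition circ_continuous :: "(real \<Rightarrow> real) \<Rightarrow> bool" where
  "circ_continuous f \<longleftrightarrow> (\<forall>x\<in>S1. \<forall>e>0. \<exists>d>0. \<forall>y\<in>S1. circ_dist x y < d \<longrightarrow> \<bar>f y - f x\<bar> < e)"

definition circ_holder :: "(real \<Rightarrow> real) \<Rightarrow> bool" where
  "circ_holder f \<longleftrightarrow> (\<exists>C \<alpha>. 0 < \<alpha> \<and> \<alpha> \<le> 1 \<and>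
     (\<forall>x\<in>S1. \<forall>y\<in>S1. \<bar>f x - f y\<bar> \<le> C * circ_dist x y powr \<alpha>))"

definition transfer :: "(real \<Rightarrow> real) \<Rightarrow> (real \<Rightarrow> real) \<Rightarrow> real \<Rightarrow> real" where
  "transfer J \<phi> y = (\<Sum>x\<in>{x\<in>S1. doubling x = y}. J x * \<phi> x)"

text \<open>Gibbs probability for log J: a probability on S1 (Borel sets of the reals,
  full mass on S1) with L^* mu = mu, tested against continuous functions on the circle.\<close>
definition gibbs_prob :: "(real \<Rightarrow> real) \<Rightarrow> real measure \<Rightarrow> bool" where
  "gibbs_prob J \<mu> \<longleftrightarrow> prob_space \<mu> \<and> sets \<mu> = sets borel \<and> emeasure \<mu> S1 = 1 \<and>
     (\<forall>\<phi>. circ_continuous \<phi> \<longrightarrow>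
        (LINT y:S1|\<mu>. transfer J \<phi> y) = (LINT y:S1|\<mu>. \<phi> y))"

definition circ_conv :: "real measure \<Rightarrow> real measure \<Rightarrow> real measure" where
  "circ_conv \<eta> \<mu> = distr (\<eta> \<Otimes>\<^sub>M \<mu>) borel (\<lambda>(x, y). frac (x + y))"

text \<open>conv_power mu n = mu * mu * ... * mu with n factors (n >= 1);
  the value at n = 0 is irrelevant and set to mu.\<close>
fun conv_power :: "real measure \<Rightarrow> nat \<Rightarrow> real measure" where
  "conv_power \<mu> 0 = \<mu>"
| "conv_power \<mu> (Suc 0) = \<mu>"
| "conv_power \<mu> (Suc (Suc n)) = circ_conv (conv_power \<mu> (Suc n)) \<mu>"

definition weak_conv_to_lebesgue :: "(nat \<Rightarrow> real measure) \<Rightarrow> bool" where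
  "weak_conv_to_lebesgue \<nu> \<longleftrightarrow> (\<forall>\<phi>. circ_continuous \<phi> \<longrightarrow>
     (\<lambda>n. LINT x:S1|\<nu> n. \<phi> x) \<longlonglongrightarrow> (LINT x:S1|lborel. \<phi> x))"

end

theory Submission
  imports Defs
begin

text \<open>
  Write \<open>c k\<close> for the \<open>k\<close>-th Fourier coefficient of \<open>\<mu>\<close>. Convolution multiplies Fourier
  coefficients, so \<open>\<nu>\<^sub>n\<close> has coefficients \<open>(c k)\<^sup>n\<close>, whereas Lebesgue measure has coefficients
  \<open>1, 0, 0, \<dots>\<close>; as trigonometric polynomials are uniformly dense among continuous functions on
  the circle, weak convergence follows once \<open>|c k| < 1\<close> for \<open>k \<noteq> 0\<close>. Testing \<open>L\<^sup>* \<mu> = \<mu>\<close>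
  against the character of frequency \<open>2 m\<close> gives \<open>c (2 m) = c m\<close>. For odd \<open>k\<close> the two preimages
  \<open>y/2\<close> and \<open>(y+1)/2\<close> of \<open>y\<close> contribute with opposite signs, so
  \<open>|c k| \<le> \<integral> |J (y/2) - J ((y+1)/2)| d\<mu> < 1\<close>, the two weights being positive with sum \<open>1\<close>.
\<close>

section \<open>Characters of the circle\<close>

definition circle_char :: "int \<Rightarrow> real \<Rightarrow> complex" where
  "circle_char k x = cis (2 * pi * of_int k * x)"

lemma circle_char_add: "circle_char k (x + y) = circle_char k x * circle_char k y"
  by (simp add: circle_char_def cis_mult distrib_left)

lemma circle_char_of_int: "circle_char k (of_int n) = 1"
proof -
  have "2 * pi * of_int k * of_int n = 2 * pi * of_int (k * n)" by simp
  then show ?thesis unfolding circle_char_def by (metis Ints_of_int cis_multiple_2pi)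
qed

lemma circle_char_frac: "circle_char k (frac x) = circle_char k x"
  using circle_char_add[of k "frac x" "of_int \<lfloor>x\<rfloor>"]
  by (simp add: circle_char_of_int frac_def)

lemma circle_char_plus_1: "circle_char k (x + 1) = circle_char k x"
  using circle_char_add[of k x 1] circle_char_of_int[of k 1] by simp

lemma norm_circle_char [simp]: "norm (circle_char k x) = 1"
  by (simp add: circle_char_def)

lemma circle_char_0 [simp]: "circle_char 0 x = 1"
  by (simp add: circle_char_def)

lemma circle_char_uminus: "circle_char (- k) x = cnj (circle_char k x)"
  by (simp add: circle_char_def cis_cnj)

lemma circle_char_mult: "circle_char k x * circle_char l x = circle_char (k + l) x"
  by (simp add: circle_char_def cis_mult distrib_left distrib_right algebra_simps)

lemma circle_char_double_half: "circle_char (2 * k) (x / 2) = circle_char k x"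
  unfolding circle_char_def by (rule arg_cong[where f = cis]) simp

lemma circle_char_odd_plus_half: "circle_char (2 * j + 1) (x + 1 / 2) = - circle_char (2 * j + 1) x"
proof -
  have "circle_char (2 * j + 1) (1 / 2) = circle_char (2 * j) (1 / 2) * circle_char 1 (1 / 2)"
    by (simp add: circle_char_mult)
  also have "circle_char (2 * j) (1 / 2) = 1"
    using circle_char_double_half[of j 1] circle_char_of_int[of j 1] by simp
  also have "circle_char 1 (1 / 2) = -1" by (simp add: circle_char_def)
  finally show ?thesis by (simp add: circle_char_add)
qed

lemma continuous_on_circle_char [continuous_intros]: "continuous_on A (circle_char k)"
  unfolding circle_char_def by (intro continuous_intros)

lemma borel_measurable_circle_char [measurable]: "circle_char k \<in> borel_measurable borel"
  using continuous_on_circle_char borel_measurable_continuous_onI by blast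

section \<open>Trigonometric polynomials\<close>

definition trig_poly :: "(real \<Rightarrow> complex) \<Rightarrow> bool" where
  "trig_poly f \<longleftrightarrow> (\<exists>K a. finite K \<and> (\<forall>t. f t = (\<Sum>k\<in>K. a k * circle_char k t)))"

lemma trig_poly_monomial: "trig_poly (\<lambda>t. c * circle_char k t)"
  unfolding trig_poly_def by (intro exI[of _ "{k}"] exI[of _ "\<lambda>_. c"]) simp

lemma trig_poly_const: "trig_poly (\<lambda>t. c)"
  using trig_poly_monomial[of c 0] by simp

lemma trig_poly_add:
  assumes "trig_poly f" "trig_poly g"
  shows "trig_poly (\<lambda>t. f t + g t)"
proof -
  obtain K a where K: "finite K" "\<forall>t. f t = (\<Sum>k\<in>K. a k * circle_char k t)"
    using assms(1) trig_poly_def by auto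
  obtain L b where L: "finite L" "\<forall>t. g t = (\<Sum>k\<in>L. b k * circle_char k t)"
    using assms(2) trig_poly_def by auto
  define a' where "a' k = (if k \<in> K then a k else 0)" for k
  define b' where "b' k = (if k \<in> L then b k else 0)" for k
  have "f t = (\<Sum>k\<in>K \<union> L. a' k * circle_char k t)" for t
    unfolding K(2)[rule_format] a'_def by (rule sum.mono_neutral_cong_left) (use K L in auto)
  moreover have "g t = (\<Sum>k\<in>K \<union> L. b' k * circle_char k t)" for t
    unfolding L(2)[rule_format] b'_def by (rule sum.mono_neutral_cong_left) (use K L in auto)
  ultimately have "\<forall>t. f t + g t = (\<Sum>k\<in>K \<union> L. (a' k + b' k) * circle_char k t)"
    by (simp add: distrib_right sum.distrib)
  then show ?thesis
    unfolding trig_poly_def using K L by (intro exI[of _ "K \<union> L"] exI[of _ "\<lambda>k. a' k + b' k"]) auto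
qed

lemma trig_poly_sum:
  assumes "finite I" "\<And>i. i \<in> I \<Longrightarrow> trig_poly (f i)"
  shows "trig_poly (\<lambda>t. \<Sum>i\<in>I. f i t)"
  using assms by (induction I rule: finite_induct) (simp_all add: trig_poly_const trig_poly_add)

lemma trig_poly_mult:
  assumes "trig_poly f" "trig_poly g"
  shows "trig_poly (\<lambda>t. f t * g t)"
proof -
  obtain K a where K: "finite K" "\<forall>t. f t = (\<Sum>k\<in>K. a k * circle_char k t)"
    using assms(1) trig_poly_def by auto
  obtain L b where L: "finite L" "\<forall>t. g t = (\<Sum>k\<in>L. b k * circle_char k t)"
    using assms(2) trig_poly_def by auto
  have "f t * g t = (\<Sum>k\<in>K. \<Sum>l\<in>L. (a k * b l) * circle_char (k + l) t)" for t
    using K L by (simp add: sum_product circle_char_mult[symmetric] algebra_simps)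
  moreover have "trig_poly (\<lambda>t. \<Sum>k\<in>K. \<Sum>l\<in>L. (a k * b l) * circle_char (k + l) t)"
    using K L by (intro trig_poly_sum trig_poly_monomial) auto
  ultimately show ?thesis by simp
qed

lemma trig_poly_real_polynomial_function_cis:
  fixes g :: "complex \<Rightarrow> real"
  assumes "real_polynomial_function g"
  shows "trig_poly (\<lambda>t. complex_of_real (g (cis (2 * pi * t))))"
  using assms
proof (induction rule: real_polynomial_function.induct)
  case (linear f)
  interpret bounded_linear f by fact
  have "f (cis x) = cos x * f 1 + sin x * f \<i>" for x
  proof -
    have "f (cis x) = f (cos x *\<^sub>R 1 + sin x *\<^sub>R \<i>)"
      by (rule arg_cong[where f = f]) (simp add: complex_eq_iff)
    also have "\<dots> = cos x *\<^sub>R f 1 + sin x *\<^sub>R f \<i>" by (simp only: add scale)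
    finally show ?thesis by simp
  qed
  then have "complex_of_real (f (cis (2 * pi * t))) =
      ((f 1 - \<i> * f \<i>) / 2) * circle_char 1 t + ((f 1 + \<i> * f \<i>) / 2) * circle_char (-1) t" for t
  proof -
    have "complex_of_real (cos x * a + sin x * b) =
        ((a - \<i> * b) / 2) * cis x + ((a + \<i> * b) / 2) * cnj (cis x)" for x a b
      by (simp add: complex_eq_iff algebra_simps) (simp add: field_simps)
    then show ?thesis
      using \<open>\<And>x. f (cis x) = cos x * f 1 + sin x * f \<i>\<close>
      by (simp add: circle_char_uminus circle_char_def cis_cnj)
  qed
  then show ?case by (simp only:) (intro trig_poly_add trig_poly_monomial)
qed (simp_all add: trig_poly_const trig_poly_add trig_poly_mult)

section \<open>Continuous functions on the circle\<close>

lemma circ_dist_le_abs: "circ_dist x y \<le> \<bar>x - y\<bar>"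
  by (simp add: circ_dist_def)

lemma circ_dist_frac_le:
  assumes "x \<in> {0..1}" "y \<in> {0..1}"
  shows "circ_dist (frac x) (frac y) \<le> \<bar>x - y\<bar>"
proof -
  have "frac t = (if t = 1 then 0 else t)" if "t \<in> {0..1}" for t :: real
    using that by (auto simp: frac_eq)
  with assms show ?thesis by (auto simp: circ_dist_def)
qed

lemma frac_in_S1 [simp]: "frac x \<in> S1"
  by (simp add: S1_def frac_lt_1)

lemma circ_continuous_imp_continuous_on_frac:
  assumes "circ_continuous \<phi>"
  shows "continuous_on {0..1} (\<lambda>t. \<phi> (frac t))"
  unfolding continuous_on_iff
proof (intro ballI allI impI)
  fix x e :: real assume x: "x \<in> {0..1}" and "0 < e"
  then obtain d where d: "d > 0" "\<forall>y\<in>S1. circ_dist (frac x) y < d \<longrightarrow> \<bar>\<phi> y - \<phi> (frac x)\<bar> < e"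
    using assms frac_in_S1[of x] unfolding circ_continuous_def by blast
  have "dist (\<phi> (frac y)) (\<phi> (frac x)) < e" if "y \<in> {0..1}" "dist y x < d" for y
  proof -
    have "circ_dist (frac x) (frac y) < d"
      using circ_dist_frac_le[OF x that(1)] that(2) by (simp add: dist_real_def abs_minus_commute)
    then show ?thesis using d(2) by (simp add: dist_real_def)
  qed
  with d(1) show "\<exists>d>0. \<forall>y\<in>{0..1}. dist y x < d \<longrightarrow> dist (\<phi> (frac y)) (\<phi> (frac x)) < e"
    by blast
qed

lemma circ_continuous_imp_continuous_on:
  assumes "circ_continuous \<phi>"
  shows "continuous_on S1 \<phi>"
  unfolding continuous_on_iff
proof (intro ballI allI impI)
  fix x e :: real assume "x \<in> S1" "0 < e"
  then obtain d where d: "d > 0" "\<forall>y\<in>S1. circ_dist x y < d \<longrightarrow> \<bar>\<phi> y - \<phi> x\<bar> < e"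
    using assms unfolding circ_continuous_def by blast
  have "dist (\<phi> y) (\<phi> x) < e" if "y \<in> S1" "dist y x < d" for y
  proof -
    have "circ_dist x y < d"
      using circ_dist_le_abs[of x y] that(2) by (simp add: dist_real_def abs_minus_commute)
    then show ?thesis using d(2) that(1) by (simp add: dist_real_def)
  qed
  with d(1) show "\<exists>d>0. \<forall>y\<in>S1. dist y x < d \<longrightarrow> dist (\<phi> y) (\<phi> x) < e"
    by blast
qed

lemma circ_continuous_periodic:
  assumes cont: "\<And>x. isCont f x" and periodic: "\<And>x. f (x + 1) = f x"
  shows "circ_continuous f"
  unfolding circ_continuous_def
proof (intro ballI allI impI)
  fix x e :: real assume x: "x \<in> S1" and "0 < e"
  then obtain d where d: "d > 0" "\<forall>x'. \<bar>x' - x\<bar> < d \<longrightarrow> \<bar>f x' - f x\<bar> < e"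
    using cont[of x] unfolding continuous_at_eps_delta dist_real_def by blast
  have "\<bar>f y - f x\<bar> < e" if y: "y \<in> S1" "circ_dist x y < d" for y
  proof -
    have "\<bar>x - y\<bar> < 1" using x y(1) by (auto simp: S1_def)
    then consider "\<bar>y - x\<bar> < d" | "\<bar>(y + 1) - x\<bar> < d" | "\<bar>(y - 1) - x\<bar> < d"
      using y(2) by (auto simp: circ_dist_def min_def abs_if split: if_splits)
    then show ?thesis
      using d(2) periodic[of y] periodic[of "y - 1"] by cases force+
  qed
  with d(1) show "\<exists>d>0. \<forall>y\<in>S1. circ_dist x y < d \<longrightarrow> \<bar>f y - f x\<bar> < e"
    by blast
qed

lemma circ_continuous_Re_circle_char: "circ_continuous (\<lambda>x. Re (circle_char k x))"
proof (rule circ_continuous_periodic)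
  show "isCont (\<lambda>x. Re (circle_char k x)) x" for x
    by (simp add: circle_char_def; intro continuous_intros)
qed (simp add: circle_char_plus_1)

lemma circ_continuous_Im_circle_char: "circ_continuous (\<lambda>x. Im (circle_char k x))"
proof (rule circ_continuous_periodic)
  show "isCont (\<lambda>x. Im (circle_char k x)) x" for x
    by (simp add: circle_char_def; intro continuous_intros)
qed (simp add: circle_char_plus_1)

lemma circ_holder_imp_continuous_on:
  assumes "circ_holder J"
  shows "continuous_on S1 J"
proof -
  obtain C \<alpha> where \<alpha>: "0 < \<alpha>"
    and H: "\<forall>x\<in>S1. \<forall>y\<in>S1. \<bar>J x - J y\<bar> \<le> C * circ_dist x y powr \<alpha>"
    using assms unfolding circ_holder_def by blast
  show ?thesis unfolding continuous_on_iff
  proof (intro ballI allI impI)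
    fix x e :: real assume x: "x \<in> S1" and e: "0 < e"
    define d where "d = (e / (\<bar>C\<bar> + 1)) powr (1 / \<alpha>)"
    have "d > 0" unfolding d_def using e by simp
    have d_powr: "d powr \<alpha> = e / (\<bar>C\<bar> + 1)"
      unfolding d_def using \<alpha> e by (simp add: powr_powr)
    have "dist (J y) (J x) < e" if y: "y \<in> S1" "dist y x < d" for y
    proof -
      have "0 \<le> circ_dist y x" using x y(1) by (auto simp: circ_dist_def S1_def)
      moreover have "circ_dist y x < d"
        using circ_dist_le_abs[of y x] y(2) by (simp add: dist_real_def)
      ultimately have small: "circ_dist y x powr \<alpha> < e / (\<bar>C\<bar> + 1)"
        using powr_less_mono2[OF \<alpha>] d_powr by metis
      have "\<bar>J y - J x\<bar> \<le> \<bar>C\<bar> * circ_dist y x powr \<alpha>"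
        using H x y(1) by (meson abs_ge_self mult_right_mono order_trans powr_ge_zero)
      also have "\<dots> \<le> \<bar>C\<bar> * (e / (\<bar>C\<bar> + 1))" using small by (intro mult_left_mono) auto
      also have "\<dots> < e" using e by (simp add: field_simps)
      finally show ?thesis by (simp add: dist_real_def)
    qed
    with \<open>d > 0\<close> show "\<exists>d>0. \<forall>y\<in>S1. dist y x < d \<longrightarrow> dist (J y) (J x) < e"
      by blast
  qed
qed

lemma bij_betw_cis_S1_sphere: "bij_betw (\<lambda>t. cis (2 * pi * t)) S1 (sphere 0 1)"
proof (rule bij_betw_imageI)
  show "inj_on (\<lambda>t. cis (2 * pi * t)) S1"
  proof (rule inj_onI)
    fix s s' assume S1: "s \<in> S1" "s' \<in> S1" and eq: "cis (2 * pi * s) = cis (2 * pi * s')"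
    have "cos (2 * pi * (s - s')) = 1"
      using eq by (metis cis.sel(1) cis_divide cis_neq_zero divide_self_if one_complex.sel(1)
          right_diff_distrib)
    then obtain n :: int where "s - s' = of_int n"
      by (auto simp: cos_one_2pi_int)
    moreover have "\<bar>s - s'\<bar> < 1" using S1 by (auto simp: S1_def)
    ultimately have "\<bar>n\<bar> < 1" by linarith
    with \<open>s - s' = of_int n\<close> show "s = s'" by simp
  qed
  show "(\<lambda>t. cis (2 * pi * t)) ` S1 = sphere 0 1"
  proof
    show "sphere 0 1 \<subseteq> (\<lambda>t. cis (2 * pi * t)) ` S1"
    proof
      fix z :: complex assume z: "z \<in> sphere 0 1"
      then have "z \<noteq> 0" by auto
      with z have "cis (2 * pi * (Arg z / (2 * pi))) = z"
        by (simp add: cis_Arg complex_sgn_def)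
      then have "cis (2 * pi * frac (Arg z / (2 * pi))) = z"
        using circle_char_frac[of 1 "Arg z / (2 * pi)"] by (simp add: circle_char_def)
      then show "z \<in> (\<lambda>t. cis (2 * pi * t)) ` S1" by (metis frac_in_S1 image_eqI)
    qed
  qed auto
qed

lemma continuous_on_sphere_circ_continuous:
  assumes "circ_continuous \<phi>"
  shows "continuous_on (sphere 0 1) (\<phi> \<circ> inv_into S1 (\<lambda>t. cis (2 * pi * t)))"
proof -
  define q :: "real \<Rightarrow> complex" where "q = (\<lambda>t. cis (2 * pi * t))"
  have bij: "bij_betw q S1 (sphere 0 1)"
    unfolding q_def by (rule bij_betw_cis_S1_sphere)
  have q_frac: "q (frac t) = q t" for t
    using circle_char_frac[of 1 t] by (simp add: q_def circle_char_def)
  have "(\<phi> \<circ> inv_into S1 q) \<circ> q = (\<lambda>t. \<phi> (frac t))"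
  proof (rule ext)
    fix t
    have "inv_into S1 q (q (frac t)) = frac t"
      by (rule bij_betw_inv_into_left[OF bij frac_in_S1])
    then show "((\<phi> \<circ> inv_into S1 q) \<circ> q) t = \<phi> (frac t)" by (simp add: q_frac)
  qed
  then have "continuous_map (top_of_set {0..1}) euclidean ((\<phi> \<circ> inv_into S1 q) \<circ> q)"
    using circ_continuous_imp_continuous_on_frac[OF assms] by simp
  moreover have "quotient_map (top_of_set {0..1}) (top_of_set (sphere 0 1)) q"
  proof (rule continuous_imp_quotient_map)
    have "q ` {0..1} \<subseteq> sphere 0 1" by (auto simp: q_def)
    moreover have "sphere 0 1 = q ` S1" using bij by (simp add: bij_betw_def)
    moreover have "S1 \<subseteq> {0..1}" by (auto simp: S1_def)
    ultimately have q_image: "q ` {0..1} = sphere 0 1" by blast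
    moreover have "continuous_on {0..1} q" unfolding q_def by (intro continuous_intros)
    ultimately show "continuous_map (top_of_set {0..1}) (top_of_set (sphere 0 1)) q"
      by (auto simp: continuous_map_in_subtopology)
    show "compact_space (top_of_set {0..1::real})"
      by (simp add: compact_space_subtopology compactin_euclidean_iff)
    show "Hausdorff_space (top_of_set (sphere (0::complex) 1))"
      by (simp add: Hausdorff_space_subtopology)
    show "q ` topspace (top_of_set {0..1}) = topspace (top_of_set (sphere 0 1))"
      using q_image by simp
  qed
  ultimately have "continuous_map (top_of_set (sphere 0 1)) euclidean (\<phi> \<circ> inv_into S1 q)"
    using continuous_compose_quotient_map by blast
  then show ?thesis by (simp add: q_def)
qed

lemma circ_continuous_trig_poly_approx:
  assumes "circ_continuous \<phi>" "e > 0"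
  obtains h where "trig_poly h" "\<And>t. t \<in> S1 \<Longrightarrow> \<bar>\<phi> t - Re (h t)\<bar> < e"
proof -
  obtain g where g: "real_polynomial_function g"
    "\<And>z. z \<in> sphere 0 1 \<Longrightarrow> \<bar>(\<phi> \<circ> inv_into S1 (\<lambda>t. cis (2 * pi * t))) z - g z\<bar> < e"
    using Stone_Weierstrass_real_polynomial_function[OF compact_sphere
        continuous_on_sphere_circ_continuous[OF assms(1)] assms(2)] by metis
  show thesis
  proof
    show "trig_poly (\<lambda>t. complex_of_real (g (cis (2 * pi * t))))"
      by (rule trig_poly_real_polynomial_function_cis[OF g(1)])
    show "\<bar>\<phi> t - Re (complex_of_real (g (cis (2 * pi * t))))\<bar> < e" if "t \<in> S1" for t
      using g(2)[of "cis (2 * pi * t)"] bij_betw_inv_into_left[OF bij_betw_cis_S1_sphere that] by simp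
  qed
qed

section \<open>Integrals over the circle and Fourier coefficients\<close>

lemma set_integral_Re:
  assumes "set_integrable M A f"
  shows "(LINT x:A|M. Re (f x)) = Re (LINT x:A|M. f x)"
  using integral_Re[of M "\<lambda>x. indicator A x *\<^sub>R f x"] assms
  by (simp add: set_integrable_def set_lebesgue_integral_def)

lemma set_integral_Im:
  assumes "set_integrable M A f"
  shows "(LINT x:A|M. Im (f x)) = Im (LINT x:A|M. f x)"
  using integral_Im[of M "\<lambda>x. indicator A x *\<^sub>R f x"] assms
  by (simp add: set_integrable_def set_lebesgue_integral_def)

lemma set_integrable_const:
  "A \<in> sets M \<Longrightarrow> emeasure M A < \<infinity> \<Longrightarrow> set_integrable M A (\<lambda>_. c)"
  unfolding set_integrable_def by (rule integrable_indicator)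

lemma set_integrable_S1_bounded:
  fixes f :: "real \<Rightarrow> 'b::{banach, second_countable_topology}"
  assumes "sets M = sets borel" "emeasure M S1 < \<infinity>"
    and "continuous_on S1 f" "\<And>x. x \<in> S1 \<Longrightarrow> norm (f x) \<le> B"
  shows "set_integrable M S1 f"
proof (rule set_integrable_bound)
  show "set_integrable M S1 (\<lambda>_. B)"
    using assms(1,2) by (intro set_integrable_const) (auto simp: S1_def)
  have "(\<lambda>x. indicator S1 x *\<^sub>R f x) \<in> borel_measurable borel"
    by (rule borel_measurable_continuous_on_indicator[OF _ assms(3)]) (simp add: S1_def)
  then show "set_borel_measurable M S1 f"
    unfolding set_borel_measurable_def using measurable_cong_sets[OF assms(1) refl] by blast
  show "AE x in M. x \<in> S1 \<longrightarrow> norm (f x) \<le> norm B"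
    using assms(4) by (intro AE_I2 impI) (metis abs_ge_self order_trans real_norm_def)
qed

definition circle_prob :: "real measure \<Rightarrow> bool" where
  "circle_prob M \<longleftrightarrow> prob_space M \<and> sets M = sets borel \<and> emeasure M S1 = 1"

lemma set_integral_S1_eq_integral:
  assumes "circle_prob M" and f: "f \<in> borel_measurable borel"
  shows "(LINT x:S1|M. f x) = integral\<^sup>L M f"
proof -
  interpret prob_space M using assms(1) by (simp add: circle_prob_def)
  have M: "sets M = sets borel" "emeasure M S1 = 1" using assms(1) by (auto simp: circle_prob_def)
  have S1: "S1 \<in> sets M" using M(1) by (simp add: S1_def)
  have "measure M S1 = 1" using M(2) by (simp add: measure_def)
  then have "AE x in M. x \<in> S1" using AE_in_set_eq_1[OF S1] by simp
  moreover have "f \<in> borel_measurable M" using f measurable_cong_sets[OF M(1) refl] by blast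
  ultimately show ?thesis unfolding set_lebesgue_integral_def
    by (intro integral_cong_AE) (use S1 in auto)
qed

lemma set_integral_S1_less_1:
  fixes f :: "real \<Rightarrow> real"
  assumes "circle_prob M" "continuous_on S1 f" "\<And>x. x \<in> S1 \<Longrightarrow> \<bar>f x\<bar> < 1"
  shows "(LINT x:S1|M. f x) < 1"
proof -
  interpret prob_space M using assms(1) by (simp add: circle_prob_def)
  have M: "sets M = sets borel" "emeasure M S1 = 1" using assms(1) by (auto simp: circle_prob_def)
  have S1: "S1 \<in> sets M" using M(1) by (simp add: S1_def)
  have "set_integrable M S1 f"
    by (rule set_integrable_S1_bounded[where B=1]) (use M assms(2,3) in \<open>force+\<close>)
  moreover have "integrable M (indicator S1 :: real \<Rightarrow> real)"
    using S1 M(2) by (intro integrable_real_indicator) auto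
  moreover have "f x < 1" if "x \<in> S1" for x
    using assms(3)[OF that] by simp
  ultimately have "(LINT x:S1|M. f x) < integral\<^sup>L M (indicator S1 :: real \<Rightarrow> real)"
    unfolding set_lebesgue_integral_def set_integrable_def using M(2) S1
    by (intro integral_less_AE[where A=S1]) (fastforce simp: indicator_def intro!: AE_I2)+
  also have "\<dots> = 1" using M(2) S1 by (simp add: measure_def)
  finally show ?thesis .
qed

definition fourier_coeff :: "real measure \<Rightarrow> int \<Rightarrow> complex" where
  "fourier_coeff M k = (LINT x:S1|M. circle_char k x)"

lemma fourier_coeff_eq_integral: "circle_prob M \<Longrightarrow> fourier_coeff M k = integral\<^sup>L M (circle_char k)"
  unfolding fourier_coeff_def by (rule set_integral_S1_eq_integral) simp_all

lemma fourier_coeff_0: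
  assumes "circle_prob M"
  shows "fourier_coeff M 0 = 1"
proof -
  interpret prob_space M using assms by (simp add: circle_prob_def)
  have "circle_char 0 = (\<lambda>_. 1)" by auto
  then show ?thesis using assms by (simp add: fourier_coeff_eq_integral prob_space)
qed

lemma fourier_coeff_lborel: "fourier_coeff lborel k = (if k = 0 then 1 else 0)"
proof (cases "k = 0")
  case True
  then show ?thesis by (simp add: fourier_coeff_def set_integral_const S1_def)
next
  case False
  define a where "a = \<i> * complex_of_real (2 * pi * of_int k)"
  have "a \<noteq> 0" using False by (simp add: a_def)
  have char_exp: "circle_char k = (\<lambda>x. exp (a * complex_of_real x))"
    by (simp add: fun_eq_iff circle_char_def a_def cis_conv_exp mult_ac)
  have "((\<lambda>z. exp (a * z) / a) has_field_derivative exp (a * z)) (at z)" for z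
    using \<open>a \<noteq> 0\<close> by (auto intro!: derivative_eq_intros simp: field_simps)
  then have "((\<lambda>x. exp (a * complex_of_real x) / a) has_vector_derivative exp (a * complex_of_real x))
      (at x within {0..1})" for x
    by (rule has_vector_derivative_real_field)
  then have "((\<lambda>x. exp (a * complex_of_real x)) has_integral
      (exp (a * complex_of_real 1) / a - exp (a * complex_of_real 0) / a)) {0..1}"
    by (intro fundamental_theorem_of_calculus) auto
  moreover have "exp a = 1" using circle_char_of_int[of k 1] by (simp add: char_exp)
  ultimately have "(circle_char k has_integral 0) {0..1}" by (simp add: char_exp)
  then have "(circle_char k has_integral 0) {0<..<1}" by (simp add: has_integral_Icc_iff_Ioo)
  moreover have "negligible {x \<in> S1 - {0<..<1}. circle_char k x \<noteq> 0}"
    by (rule negligible_subset[of "{0}"]) (auto simp: S1_def)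
  moreover have "negligible {x \<in> {0<..<1} - S1. circle_char k x \<noteq> 0}"
    by (rule negligible_subset[of "{}"]) (auto simp: S1_def)
  ultimately have "(circle_char k has_integral 0) S1"
    using has_integral_spike_set_eq by blast
  moreover have "set_integrable lborel S1 (circle_char k)"
    by (rule set_integrable_S1_bounded[where B=1]) (auto simp: S1_def intro: continuous_intros)
  ultimately show ?thesis
    using False by (simp add: fourier_coeff_def set_borel_integral_eq_integral integral_unique)
qed

lemma set_integral_S1_abs_le:
  fixes g :: "real \<Rightarrow> real"
  assumes M: "sets M = sets borel" "emeasure M S1 = 1"
    and g: "set_integrable M S1 g" "\<And>x. x \<in> S1 \<Longrightarrow> \<bar>g x\<bar> \<le> \<delta>"
  shows "\<bar>LINT x:S1|M. g x\<bar> \<le> \<delta>"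
proof -
  have S1: "S1 \<in> sets M" using M(1) by (simp add: S1_def)
  have const: "(LINT x:S1|M. c) = c" for c :: real
    using M(2) S1 by (simp add: set_integral_const measure_def)
  have const_int: "set_integrable M S1 (\<lambda>_. c)" for c :: real
    using S1 M(2) by (intro set_integrable_const) auto
  have "(LINT x:S1|M. g x) \<le> (LINT x:S1|M. \<delta>)"
    using g by (intro set_integral_mono[OF g(1) const_int]) (force simp: abs_le_iff)
  moreover have "(LINT x:S1|M. - \<delta>) \<le> (LINT x:S1|M. g x)"
    using g by (intro set_integral_mono[OF const_int g(1)]) (force simp: abs_le_iff)
  ultimately show ?thesis by (simp add: const abs_le_iff)
qed

lemma set_integral_S1_trig_poly:
  assumes "sets M = sets borel" "emeasure M S1 = 1"
  shows "set_integrable M S1 (\<lambda>t. \<Sum>k\<in>K. a k * circle_char k t)"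
    and "(LINT t:S1|M. (\<Sum>k\<in>K. a k * circle_char k t)) = (\<Sum>k\<in>K. a k * fourier_coeff M k)"
proof -
  have fin: "emeasure M S1 < \<infinity>" using assms(2) by simp
  have char_int: "set_integrable M S1 (\<lambda>t. a k * circle_char k t)" for k
    by (intro set_integrable_mult_right set_integrable_S1_bounded[where B=1])
      (use assms fin in \<open>auto intro: continuous_intros\<close>)
  then show "set_integrable M S1 (\<lambda>t. \<Sum>k\<in>K. a k * circle_char k t)"
    unfolding set_integrable_def by (simp add: scaleR_sum_right)
  have "(LINT t:S1|M. (\<Sum>k\<in>K. a k * circle_char k t)) = (\<Sum>k\<in>K. LINT t:S1|M. a k * circle_char k t)"
    using char_int unfolding set_lebesgue_integral_def set_integrable_def
    by (simp add: scaleR_sum_right Bochner_Integration.integral_sum)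
  then show "(LINT t:S1|M. (\<Sum>k\<in>K. a k * circle_char k t)) = (\<Sum>k\<in>K. a k * fourier_coeff M k)"
    by (simp add: fourier_coeff_def)
qed

lemma set_integral_trig_poly_approx:
  assumes M: "sets M = sets borel" "emeasure M S1 = 1" and "continuous_on S1 \<phi>"
    and approx: "\<And>t. t \<in> S1 \<Longrightarrow> \<bar>\<phi> t - Re (\<Sum>k\<in>K. a k * circle_char k t)\<bar> \<le> \<delta>"
  shows "\<bar>(LINT x:S1|M. \<phi> x) - Re (\<Sum>k\<in>K. a k * fourier_coeff M k)\<bar> \<le> \<delta>"
proof -
  define h where "h t = (\<Sum>k\<in>K. a k * circle_char k t)" for t
  have h_int: "set_integrable M S1 h"
    unfolding h_def by (rule set_integral_S1_trig_poly(1)[OF M])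
  have Re_h_int: "set_integrable M S1 (\<lambda>t. Re (h t))"
    using integrable_Re[OF h_int[unfolded set_integrable_def]] unfolding set_integrable_def by simp
  define B where "B = (\<Sum>k\<in>K. norm (a k))"
  have h_norm: "norm (h t) \<le> B" for t
  proof -
    have "norm (h t) \<le> (\<Sum>k\<in>K. norm (a k * circle_char k t))" unfolding h_def by (rule norm_sum)
    then show ?thesis by (simp add: B_def norm_mult)
  qed
  have "norm (\<phi> t) \<le> \<delta> + B" if "t \<in> S1" for t
    using approx[OF that] abs_Re_le_cmod[of "h t"] h_norm[of t] unfolding h_def real_norm_def by arith
  then have \<phi>_int: "set_integrable M S1 \<phi>"
    by (rule set_integrable_S1_bounded[rotated 3]) (use M assms(3) in simp_all)
  have "(LINT x:S1|M. \<phi> x - Re (h x)) = (LINT x:S1|M. \<phi> x) - Re (LINT x:S1|M. h x)"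
    by (simp only: set_integral_diff(2)[OF \<phi>_int Re_h_int] set_integral_Re[OF h_int])
  also have "(LINT x:S1|M. h x) = (\<Sum>k\<in>K. a k * fourier_coeff M k)"
    unfolding h_def by (rule set_integral_S1_trig_poly(2)[OF M])
  finally have "(LINT x:S1|M. \<phi> x) - Re (\<Sum>k\<in>K. a k * fourier_coeff M k) =
      (LINT x:S1|M. \<phi> x - Re (h x))" ..
  moreover have "\<bar>LINT x:S1|M. \<phi> x - Re (h x)\<bar> \<le> \<delta>"
    by (rule set_integral_S1_abs_le[OF M set_integral_diff(1)[OF \<phi>_int Re_h_int]])
      (use approx in \<open>simp add: h_def\<close>)
  ultimately show ?thesis by simp
qed

lemma tendsto_set_integral_if_fourier_coeff_tendsto:
  assumes \<nu>: "\<And>n. sets (\<nu> n) = sets borel" "\<And>n. emeasure (\<nu> n) S1 = 1"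
    and M: "sets M = sets borel" "emeasure M S1 = 1"
    and coeff: "\<And>k. (\<lambda>n. fourier_coeff (\<nu> n) k) \<longlonglongrightarrow> fourier_coeff M k"
    and "circ_continuous \<phi>"
  shows "(\<lambda>n. LINT x:S1|\<nu> n. \<phi> x) \<longlonglongrightarrow> (LINT x:S1|M. \<phi> x)"
proof (rule LIMSEQ_I)
  fix r :: real assume "0 < r"
  then have "r / 3 > 0" by simp
  have \<phi>_cont: "continuous_on S1 \<phi>" by (rule circ_continuous_imp_continuous_on) fact
  obtain h where "trig_poly h" and h: "\<And>t. t \<in> S1 \<Longrightarrow> \<bar>\<phi> t - Re (h t)\<bar> < r / 3"
    using circ_continuous_trig_poly_approx[OF assms(6) \<open>r / 3 > 0\<close>] by blast
  then obtain K a where h_eq: "\<And>t. h t = (\<Sum>k\<in>K. a k * circle_char k t)"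
    unfolding trig_poly_def by blast
  have approx: "\<bar>\<phi> t - Re (\<Sum>k\<in>K. a k * circle_char k t)\<bar> \<le> r / 3" if "t \<in> S1" for t
    using h[OF that] unfolding h_eq by (rule less_imp_le)
  have "(\<lambda>n. Re (\<Sum>k\<in>K. a k * fourier_coeff (\<nu> n) k)) \<longlonglongrightarrow> Re (\<Sum>k\<in>K. a k * fourier_coeff M k)"
    by (intro tendsto_intros coeff)
  then obtain N where N: "\<forall>n\<ge>N.
      norm (Re (\<Sum>k\<in>K. a k * fourier_coeff (\<nu> n) k) - Re (\<Sum>k\<in>K. a k * fourier_coeff M k)) < r / 3"
    using LIMSEQ_D[OF _ \<open>r / 3 > 0\<close>] by blast
  have \<nu>_approx: "\<bar>(LINT x:S1|\<nu> n. \<phi> x) - Re (\<Sum>k\<in>K. a k * fourier_coeff (\<nu> n) k)\<bar> \<le> r / 3" for n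
    by (rule set_integral_trig_poly_approx[OF \<nu>(1,2) \<phi>_cont approx])
  have M_approx: "\<bar>(LINT x:S1|M. \<phi> x) - Re (\<Sum>k\<in>K. a k * fourier_coeff M k)\<bar> \<le> r / 3"
    by (rule set_integral_trig_poly_approx[OF M \<phi>_cont approx])
  have "\<bar>(LINT x:S1|\<nu> n. \<phi> x) - (LINT x:S1|M. \<phi> x)\<bar> < r" if "n \<ge> N" for n
  proof -
    have "\<bar>Re (\<Sum>k\<in>K. a k * fourier_coeff (\<nu> n) k) - Re (\<Sum>k\<in>K. a k * fourier_coeff M k)\<bar> < r / 3"
      using N that by simp
    then show ?thesis using \<nu>_approx[of n] M_approx by arith
  qed
  then show "\<exists>N. \<forall>n\<ge>N. norm ((LINT x:S1|\<nu> n. \<phi> x) - (LINT x:S1|M. \<phi> x)) < r"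
    by auto
qed

section \<open>Convolution on the circle\<close>

lemma
  assumes "circle_prob \<nu>" "circle_prob \<mu>"
  shows circle_prob_circ_conv: "circle_prob (circ_conv \<nu> \<mu>)"
    and fourier_coeff_circ_conv: "fourier_coeff (circ_conv \<nu> \<mu>) k = fourier_coeff \<nu> k * fourier_coeff \<mu> k"
proof -
  have \<nu>: "prob_space \<nu>" "sets \<nu> = sets borel" and \<mu>: "prob_space \<mu>" "sets \<mu> = sets borel"
    using assms by (auto simp: circle_prob_def)
  interpret pair_sigma_finite \<nu> \<mu>
    by (intro pair_sigma_finite.intro prob_space_imp_sigma_finite \<nu>(1) \<mu>(1))
  interpret \<nu>\<mu>: prob_space "\<nu> \<Otimes>\<^sub>M \<mu>" by (rule prob_space_pair[OF \<nu>(1) \<mu>(1)])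
  have sets_pair: "sets (\<nu> \<Otimes>\<^sub>M \<mu>) = sets (borel \<Otimes>\<^sub>M borel)"
    by (rule sets_pair_measure_cong[OF \<nu>(2) \<mu>(2)])
  have add_mod_1: "(\<lambda>(x, y). frac (x + y)) \<in> borel_measurable (\<nu> \<Otimes>\<^sub>M \<mu>)"
    unfolding measurable_cong_sets[OF sets_pair refl] frac_def by measurable
  have "prob_space (circ_conv \<nu> \<mu>)"
    unfolding circ_conv_def by (rule \<nu>\<mu>.prob_space_distr[OF add_mod_1])
  moreover have "emeasure (circ_conv \<nu> \<mu>) S1 = 1"
  proof -
    have "(\<lambda>(x, y). frac (x + y)) -` S1 \<inter> space (\<nu> \<Otimes>\<^sub>M \<mu>) = space (\<nu> \<Otimes>\<^sub>M \<mu>)"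
      by auto
    then show ?thesis unfolding circ_conv_def
      by (subst emeasure_distr[OF add_mod_1]) (simp_all add: S1_def \<nu>\<mu>.emeasure_space_1)
  qed
  ultimately show conv: "circle_prob (circ_conv \<nu> \<mu>)"
    by (simp add: circle_prob_def circ_conv_def)
  have "integral\<^sup>L (circ_conv \<nu> \<mu>) (circle_char k) =
      (\<integral>z. circle_char k (case z of (x, y) \<Rightarrow> frac (x + y)) \<partial>(\<nu> \<Otimes>\<^sub>M \<mu>))"
    unfolding circ_conv_def by (rule integral_distr[OF add_mod_1]) simp
  also have "\<dots> = (\<integral>(x, y). circle_char k x * circle_char k y \<partial>(\<nu> \<Otimes>\<^sub>M \<mu>))"
    by (rule Bochner_Integration.integral_cong) (auto simp: circle_char_frac circle_char_add)
  also have "\<dots> = (\<integral>x. (\<integral>y. circle_char k x * circle_char k y \<partial>\<mu>) \<partial>\<nu>)"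
  proof (rule integral_fst[symmetric])
    have "(\<lambda>(x, y). circle_char k x * circle_char k y) \<in> borel_measurable (\<nu> \<Otimes>\<^sub>M \<mu>)"
      unfolding measurable_cong_sets[OF sets_pair refl] by measurable
    then show "integrable (\<nu> \<Otimes>\<^sub>M \<mu>) (\<lambda>(x, y). circle_char k x * circle_char k y)"
      by (intro \<nu>\<mu>.integrable_const_bound[where B=1]) (auto simp: norm_mult)
  qed
  also have "\<dots> = integral\<^sup>L \<nu> (circle_char k) * integral\<^sup>L \<mu> (circle_char k)"
    by simp
  finally show "fourier_coeff (circ_conv \<nu> \<mu>) k = fourier_coeff \<nu> k * fourier_coeff \<mu> k"
    using assms conv by (simp add: fourier_coeff_eq_integral)
qed

lemma circle_prob_conv_power: "circle_prob \<mu> \<Longrightarrow> circle_prob (conv_power \<mu> n)"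
  by (induction \<mu> n rule: conv_power.induct) (simp_all add: circle_prob_circ_conv)

lemma fourier_coeff_conv_power:
  "circle_prob \<mu> \<Longrightarrow> fourier_coeff (conv_power \<mu> (Suc n)) k = fourier_coeff \<mu> k ^ Suc n"
  by (induction n) (simp_all add: fourier_coeff_circ_conv circle_prob_conv_power)

section \<open>The doubling map and Gibbs measures\<close>

lemma half_in_S1: "y \<in> S1 \<Longrightarrow> y / 2 \<in> S1" "y \<in> S1 \<Longrightarrow> (y + 1) / 2 \<in> S1"
  by (auto simp: S1_def)

lemma doubling_preimage:
  assumes "y \<in> S1"
  shows "{x \<in> S1. doubling x = y} = {y / 2, (y + 1) / 2}"
proof
  have y: "0 \<le> y" "y < 1" using assms by (auto simp: S1_def)
  have "frac (y + 1) = y" using y by (simp add: frac_unique_iff)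
  moreover have "2 * ((y + 1) / 2) = y + 1" by simp
  ultimately have "doubling ((y + 1) / 2) = y" unfolding doubling_def by (simp only:)
  moreover have "doubling (y / 2) = y" using y by (simp add: doubling_def frac_eq)
  ultimately show "{y / 2, (y + 1) / 2} \<subseteq> {x \<in> S1. doubling x = y}"
    using half_in_S1[OF assms] by auto
  show "{x \<in> S1. doubling x = y} \<subseteq> {y / 2, (y + 1) / 2}"
  proof
    fix x assume "x \<in> {x \<in> S1. doubling x = y}"
    then have x: "0 \<le> x" "x < 1" and "frac (2 * x) = y" by (auto simp: S1_def doubling_def)
    moreover have "frac (2 * x) = (if 2 * x < 1 then 2 * x else 2 * x - 1)"
      using x by (subst frac_unique_iff) (auto simp: Ints_def intro: exI[of _ 1])
    ultimately show "x \<in> {y / 2, (y + 1) / 2}" by (auto split: if_splits)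
  qed
qed

lemma transfer_S1:
  assumes "y \<in> S1"
  shows "transfer J \<phi> y = J (y / 2) * \<phi> (y / 2) + J ((y + 1) / 2) * \<phi> ((y + 1) / 2)"
  unfolding transfer_def doubling_preimage[OF assms] by simp

lemma norm_less_1_if_double_odd:
  fixes c :: "int \<Rightarrow> 'a::real_normed_vector"
  assumes double: "\<And>m. c (2 * m) = c m" and odd: "\<And>j. norm (c (2 * j + 1)) < 1"
  shows "k \<noteq> 0 \<Longrightarrow> norm (c k) < 1"
proof (induction "nat \<bar>k\<bar>" arbitrary: k rule: less_induct)
  case less
  show ?case
  proof (cases "even k")
    case True
    then obtain m where "k = 2 * m" by (auto elim: evenE)
    with less.prems have "m \<noteq> 0" "nat \<bar>m\<bar> < nat \<bar>k\<bar>" by auto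
    with less.hyps[of m] \<open>k = 2 * m\<close> double show ?thesis by simp
  next
    case False
    then obtain j where "k = 2 * j + 1" by (auto elim: oddE)
    with odd show ?thesis by simp
  qed
qed

locale doubling_gibbs =
  fixes J :: "real \<Rightarrow> real" and \<mu> :: "real measure"
  assumes J_pos: "\<forall>x\<in>S1. J x > 0"
    and J_holder: "circ_holder J"
    and J_normalized: "\<forall>y\<in>S1. (\<Sum>x\<in>{x\<in>S1. doubling x = y}. J x) = 1"
    and gibbs: "gibbs_prob J \<mu>"
begin

lemma circle_prob: "circle_prob \<mu>"
  using gibbs by (simp add: gibbs_prob_def circle_prob_def)

lemma J_half_sum: "y \<in> S1 \<Longrightarrow> J (y / 2) + J ((y + 1) / 2) = 1"
  using J_normalized by (simp add: doubling_preimage)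

lemma continuous_on_J_half: "continuous_on S1 (\<lambda>y. J (y / 2))" "continuous_on S1 (\<lambda>y. J ((y + 1) / 2))"
  by (auto intro!: continuous_on_compose2[OF circ_holder_imp_continuous_on[OF J_holder]]
      continuous_intros simp: half_in_S1)

text \<open>\<open>gibbs_prob\<close> only tests real functions, so it is applied to the real and imaginary parts
  of the character separately.\<close>
lemma fourier_coeff_gibbs:
  "fourier_coeff \<mu> k =
    (LINT y:S1|\<mu>. J (y / 2) * circle_char k (y / 2) + J ((y + 1) / 2) * circle_char k ((y + 1) / 2))"
  (is "_ = (LINT y:S1|\<mu>. ?g y)")
proof -
  have \<mu>: "sets \<mu> = sets borel" "emeasure \<mu> S1 < \<infinity>" and S1: "S1 \<in> sets \<mu>"
    using circle_prob by (auto simp: circle_prob_def S1_def)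
  have invariant: "(LINT y:S1|\<mu>. transfer J \<phi> y) = (LINT y:S1|\<mu>. \<phi> y)" if "circ_continuous \<phi>" for \<phi>
    using gibbs that by (simp add: gibbs_prob_def)
  have char_int: "set_integrable \<mu> S1 (circle_char k)"
    by (rule set_integrable_S1_bounded[where B=1]) (use \<mu> in \<open>auto intro: continuous_intros\<close>)
  have g_int: "set_integrable \<mu> S1 ?g"
  proof (rule set_integrable_S1_bounded[OF \<mu>, where B=1])
    show "continuous_on S1 ?g"
      by (intro continuous_intros continuous_on_J_half continuous_on_compose2[OF continuous_on_circle_char])
        auto
    fix y assume y: "y \<in> S1"
    have "J (y / 2) > 0" "J ((y + 1) / 2) > 0" using J_pos half_in_S1[OF y] by auto
    then have "norm (?g y) \<le> J (y / 2) + J ((y + 1) / 2)"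
      using norm_triangle_ineq[of "J (y / 2) * circle_char k (y / 2)" "J ((y + 1) / 2) * circle_char k ((y + 1) / 2)"]
      by (simp add: norm_mult)
    then show "norm (?g y) \<le> 1" using J_half_sum[OF y] by simp
  qed
  have "Re (LINT y:S1|\<mu>. ?g y) = (LINT y:S1|\<mu>. transfer J (\<lambda>x. Re (circle_char k x)) y)"
    by (auto simp: set_integral_Re[OF g_int, symmetric] transfer_S1 intro: set_lebesgue_integral_cong[OF S1])
  also have "\<dots> = Re (fourier_coeff \<mu> k)"
    by (simp add: invariant circ_continuous_Re_circle_char set_integral_Re[OF char_int] fourier_coeff_def)
  finally have Re_eq: "Re (LINT y:S1|\<mu>. ?g y) = Re (fourier_coeff \<mu> k)" .
  have "Im (LINT y:S1|\<mu>. ?g y) = (LINT y:S1|\<mu>. transfer J (\<lambda>x. Im (circle_char k x)) y)"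
    by (auto simp: set_integral_Im[OF g_int, symmetric] transfer_S1 intro: set_lebesgue_integral_cong[OF S1])
  also have "\<dots> = Im (fourier_coeff \<mu> k)"
    by (simp add: invariant circ_continuous_Im_circle_char set_integral_Im[OF char_int] fourier_coeff_def)
  finally show ?thesis using Re_eq by (simp add: complex_eq_iff)
qed

lemma fourier_coeff_double: "fourier_coeff \<mu> (2 * m) = fourier_coeff \<mu> m"
proof -
  have S1: "S1 \<in> sets \<mu>" using circle_prob by (simp add: circle_prob_def S1_def)
  have eq: "J (y / 2) * circle_char (2 * m) (y / 2) + J ((y + 1) / 2) * circle_char (2 * m) ((y + 1) / 2)
      = circle_char m y" if "y \<in> S1" for y
  proof -
    have "circle_char (2 * m) ((y + 1) / 2) = circle_char m y"
      by (simp add: circle_char_double_half circle_char_plus_1)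
    then show ?thesis
      using J_half_sum[OF that] by (simp add: circle_char_double_half flip: distrib_right of_real_add)
  qed
  have "fourier_coeff \<mu> (2 * m) = (LINT y:S1|\<mu>. circle_char m y)"
    unfolding fourier_coeff_gibbs[of "2 * m"] by (rule set_lebesgue_integral_cong[OF S1]) (simp add: eq)
  then show ?thesis by (simp add: fourier_coeff_def)
qed

lemma norm_fourier_coeff_odd_less: "norm (fourier_coeff \<mu> (2 * j + 1)) < 1"
proof -
  define D where "D y = \<bar>J (y / 2) - J ((y + 1) / 2)\<bar>" for y
  have S1: "S1 \<in> sets \<mu>" using circle_prob by (simp add: circle_prob_def S1_def)
  have D_less: "\<bar>D y\<bar> < 1" if "y \<in> S1" for y
  proof -
    have "J (y / 2) > 0" "J ((y + 1) / 2) > 0" using J_pos half_in_S1[OF that] by auto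
    then show ?thesis using J_half_sum[OF that] by (simp add: D_def abs_less_iff)
  qed
  have "norm (fourier_coeff \<mu> (2 * j + 1)) \<le>
      (LINT y:S1|\<mu>. norm (J (y / 2) * circle_char (2 * j + 1) (y / 2) +
                            J ((y + 1) / 2) * circle_char (2 * j + 1) ((y + 1) / 2)))"
    unfolding fourier_coeff_gibbs set_lebesgue_integral_def
    by (rule order_trans[OF integral_norm_bound]) (simp add: abs_mult)
  also have "\<dots> = (LINT y:S1|\<mu>. D y)"
  proof (rule set_lebesgue_integral_cong[OF S1], intro allI impI)
    fix y
    have "circle_char (2 * j + 1) ((y + 1) / 2) = - circle_char (2 * j + 1) (y / 2)"
      using circle_char_odd_plus_half[of j "y / 2"] by (simp add: add_divide_distrib)
    then show "norm (J (y / 2) * circle_char (2 * j + 1) (y / 2) +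
        J ((y + 1) / 2) * circle_char (2 * j + 1) ((y + 1) / 2)) = D y"
      by (simp add: D_def norm_mult flip: left_diff_distrib of_real_diff)
  qed
  also have "\<dots> < 1"
    by (rule set_integral_S1_less_1[OF circle_prob _ D_less])
      (auto simp: D_def intro!: continuous_intros continuous_on_J_half)
  finally show ?thesis .
qed

lemma norm_fourier_coeff_less: "k \<noteq> 0 \<Longrightarrow> norm (fourier_coeff \<mu> k) < 1"
  using norm_less_1_if_double_odd fourier_coeff_double norm_fourier_coeff_odd_less by blast

end

theorem theorem4:
  fixes J :: "real \<Rightarrow> real" and \<mu> :: "real measure"
  assumes "\<forall>x\<in>S1. J x > 0"
    and "circ_holder J"
    and "\<forall>y\<in>S1. (\<Sum>x\<in>{x\<in>S1. doubling x = y}. J x) = 1"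
    and "gibbs_prob J \<mu>"
  shows "weak_conv_to_lebesgue (conv_power \<mu>)"
proof -
  interpret doubling_gibbs J \<mu> using assms by unfold_locales
  have powers: "(\<lambda>n. fourier_coeff \<mu> k ^ Suc n) \<longlonglongrightarrow> fourier_coeff lborel k" for k
  proof (cases "k = 0")
    case False
    then have "(\<lambda>n. fourier_coeff \<mu> k ^ Suc n) \<longlonglongrightarrow> 0"
      by (intro LIMSEQ_Suc LIMSEQ_power_zero norm_fourier_coeff_less)
    with False show ?thesis by (simp add: fourier_coeff_lborel)
  qed (simp add: fourier_coeff_0[OF circle_prob] fourier_coeff_lborel)
  have coeff: "(\<lambda>n. fourier_coeff (conv_power \<mu> n) k) \<longlonglongrightarrow> fourier_coeff lborel k" for k
    by (rule LIMSEQ_imp_Suc) (simp only: fourier_coeff_conv_power[OF circle_prob] powers)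
  have "sets (conv_power \<mu> n) = sets borel" "emeasure (conv_power \<mu> n) S1 = 1" for n
    using circle_prob_conv_power[OF circle_prob] by (simp_all add: circle_prob_def)
  moreover have "emeasure lborel S1 = 1" by (simp add: S1_def)
  ultimately show ?thesis
    unfolding weak_conv_to_lebesgue_def
    using tendsto_set_integral_if_fourier_coeff_tendsto[OF _ _ sets_lborel _ coeff] by blast
qed

end
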